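(* Suppose $M$ is a real symmetric $g\times g$ matrix of signature $(g-1,1)$, and $c \in \mathbb{C}^g$ satisfies $\overline{c}^\top M c < 0$. Then $c^\top Mc \neq 0$, and the real symmetric matrix $M+M\operatorname{Re}\left(\left(-\tfrac12 c^\top Mc\right)^{-1}cc^\top\right)M$ is positive definite. *)

theory Defs
  imports "Jordan_Normal_Form.Jordan_Normal_Form" "HOL-Computational_Algebra.Polynomial"
begin

definition pos_inertia :: "real mat \<Rightarrow> nat" where
  "pos_inertia A = (\<Sum>a\<in>{a. a > 0 \<and> poly (char_poly A) a = 0}. order a (char_poly A))"

definition neg_inertia :: "real mat \<Rightarrow> nat" where
  "neg_inertia A = (\<Sum>a\<in>{a. a < 0 \<and> poly (char_poly A) a = 0}. order a (char_poly A))"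

definition has_signature :: "real mat \<Rightarrow> nat \<Rightarrow> nat \<Rightarrow> bool" where
  "has_signature A p q \<longleftrightarrow> pos_inertia A = p \<and> neg_inertia A = q"

definition pos_def_mat :: "real mat \<Rightarrow> bool" where
  "pos_def_mat A \<longleftrightarrow> A \<in> carrier_mat (dim_row A) (dim_row A) \<and>
     (\<forall>x\<in>carrier_vec (dim_row A). x \<noteq> 0\<^sub>v (dim_row A) \<longrightarrow> x \<bullet> (A *\<^sub>v x) > 0)"

end

(*
  Diagonalize M orthogonally, M = P diag(d) P^T. The signature condition says that exactly one
  weight d_k is negative, so the form q(x, y) = sum_l d_l x_l y_l is Lorentzian: a nonzero vector
  q-orthogonal to a timelike vector is spacelike. With z = P^T c the hypothesis reads
  q(Re z) + q(Im z) < 0. If c^T M c = sum_l d_l z_l^2 vanished, Re z and Im z would be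
  q-orthogonal timelike vectors, which is impossible.
  After multiplying z by a unimodular scalar, sum_l d_l z_l^2 = lambda is real and positive, so
  X = Re z and Y = Im z satisfy q(X, Y) = 0 and q(X) - q(Y) = lambda > 0 > q(X) + q(Y). For
  V = P^T v the quadratic form of the matrix N becomes q(V) - 2 (q(V, X)^2 - q(V, Y)^2) / lambda;
  splitting V along the timelike Y and using Cauchy-Schwarz on the spacelike complement of Y
  shows that it is positive for nonzero V.
*)
theory Submission
  imports Defs "Jordan_Normal_Form.Schur_Decomposition"
begin

section \<open>Orthogonal diagonalization of real symmetric matrices\<close>

lemma conjugate_of_real_mat_mult_vec:
  fixes A :: "real mat" and v :: "complex vec"
  assumes "A \<in> carrier_mat nr n" and "v \<in> carrier_vec n"
  shows "conjugate (map_mat of_real A *\<^sub>v v) = map_mat of_real A *\<^sub>v conjugate v"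
  by (rule eq_vecI) (use assms in \<open>auto simp: scalar_prod_def cnj_sum\<close>)

lemma real_symmetric_mat_has_eigenvalue:
  fixes A :: "real mat"
  assumes A: "A \<in> carrier_mat n n" and sym: "transpose_mat A = A" and n: "n > 0"
  obtains e where "eigenvalue A e"
proof -
  let ?Ac = "map_mat complex_of_real A"
  have Ac: "?Ac \<in> carrier_mat n n" using A by simp
  obtain as where cp: "char_poly ?Ac = (\<Prod>a\<leftarrow>as. [:- a, 1:])" and "length as = n"
    using char_poly_factorized[OF Ac] by blast
  then obtain a where "a \<in> set as" using n by (cases as) auto
  then have "poly (char_poly ?Ac) a = 0"
    unfolding cp by (induction as) (auto simp: poly_prod_list)
  then obtain v where "eigenvector ?Ac v a"
    using eigenvalue_root_char_poly[OF Ac] unfolding eigenvalue_def by blast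
  then have v: "v \<in> carrier_vec n" "v \<noteq> 0\<^sub>v n" and Av: "?Ac *\<^sub>v v = a \<cdot>\<^sub>v v"
    unfolding eigenvector_def using A by auto
  have "a * (v \<bullet>c v) = (?Ac *\<^sub>v v) \<bullet>c v"
    using v unfolding Av by simp
  also have "\<dots> = v \<bullet> (?Ac *\<^sub>v conjugate v)"
    using transpose_vec_mult_scalar[OF Ac carrier_vec_conjugate[OF v(1)] v(1)] sym
    by (simp add: map_mat_transpose)
  also have "\<dots> = v \<bullet>c (?Ac *\<^sub>v v)"
    unfolding conjugate_of_real_mat_mult_vec[OF A v(1)] ..
  also have "\<dots> = cnj a * (v \<bullet>c v)"
    using v unfolding Av by (simp add: conjugate_smult_vec)
  finally have "a * (v \<bullet>c v) = cnj a * (v \<bullet>c v)" .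
  moreover have "v \<bullet>c v \<noteq> 0"
    using v by simp
  ultimately have "a = cnj a"
    by simp
  then have a_real: "a = of_real (Re a)"
    by (simp add: complex_eq_iff)
  have "of_real (poly (char_poly A) (Re a)) = poly (char_poly ?Ac) a"
    by (subst a_real) (simp add: of_real_hom.char_poly_hom[OF A] of_real_hom.poly_map_poly)
  also have "\<dots> = 0" by fact
  finally show ?thesis
    using that eigenvalue_root_char_poly[OF A] by simp
qed

lemma orthonormal_extension:
  fixes v :: "real vec"
  assumes v: "v \<in> carrier_vec n" and v0: "v \<noteq> 0\<^sub>v n"
  obtains W where "W \<in> carrier_mat n n" "transpose_mat W * W = 1\<^sub>m n"
    and "col W 0 = (1 / sqrt (v \<bullet> v)) \<cdot>\<^sub>v v"
proof -
  interpret cof_vec_space n "TYPE(real)" .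
  note completion = basis_completion[OF v v0]
  define ws where "ws = gram_schmidt n (basis_completion v)"
  have ws: "set ws \<subseteq> carrier_vec n" "corthogonal ws" "length ws = n"
    using gram_schmidt_result[OF completion(2,4,5) ws_def] completion(6) by auto
  have "n > 0"
    using v v0 by (metis carrier_vecD eq_vecI index_zero_vec(2) less_nat_zero_code neq0_conv)
  have "ws ! 0 = v"
  proof -
    obtain vs where "basis_completion v = v # vs"
      using completion(6,7) \<open>n > 0\<close> by (cases "basis_completion v") auto
    then have "hd ws = v" unfolding ws_def using v by simp
    then show ?thesis using ws(3) \<open>n > 0\<close> by (cases ws) auto
  qed
  have ws_orth: "ws ! i \<bullet> ws ! j = 0 \<longleftrightarrow> i \<noteq> j" if "i < n" "j < n" for i j
    using corthogonalD[OF ws(2)] that ws(3) by simp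
  have ws_pos: "ws ! i \<bullet> ws ! i > 0" if "i < n" for i
    using ws_orth[OF that that] conjugate_square_ge_0_vec[of "ws ! i"] by simp
  define us where "us = map (\<lambda>w. (1 / sqrt (w \<bullet> w)) \<cdot>\<^sub>v w) ws"
  have us: "length us = n" "\<And>i. i < n \<Longrightarrow> us ! i \<in> carrier_vec n"
    unfolding us_def using ws by auto
  have us_orthonormal: "us ! i \<bullet> us ! j = (if i = j then 1 else 0)" if "i < n" "j < n" for i j
  proof -
    have "ws ! i \<in> carrier_vec n" "ws ! j \<in> carrier_vec n"
      using that ws by auto
    then have "us ! i \<bullet> us ! j =
        (ws ! i \<bullet> ws ! j) / (sqrt (ws ! i \<bullet> ws ! i) * sqrt (ws ! j \<bullet> ws ! j))"
      unfolding us_def using that ws by simp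
    then show ?thesis
      using ws_orth[OF that] ws_pos[OF that(1)] by (auto simp flip: power2_eq_square)
  qed
  show thesis
  proof
    show "mat_of_cols n us \<in> carrier_mat n n" using us(1) by (simp add: carrier_matI)
    show "transpose_mat (mat_of_cols n us) * mat_of_cols n us = 1\<^sub>m n"
      by (rule eq_matI) (use us us_orthonormal in auto)
    have "col (mat_of_cols n us) 0 = us ! 0"
      using us \<open>n > 0\<close> by simp
    also have "\<dots> = (1 / sqrt (v \<bullet> v)) \<cdot>\<^sub>v v"
      using \<open>ws ! 0 = v\<close> \<open>n > 0\<close> ws(3) unfolding us_def by simp
    finally show "col (mat_of_cols n us) 0 = (1 / sqrt (v \<bullet> v)) \<cdot>\<^sub>v v" .
  qed
qed

lemma transpose_congruence_symmetric:
  fixes A B :: "'a::comm_ring_1 mat"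
  assumes A: "A \<in> carrier_mat n n" and B: "B \<in> carrier_mat n k" and sym: "transpose_mat A = A"
  shows "transpose_mat (transpose_mat B * A * B) = transpose_mat B * A * B"
proof -
  have "transpose_mat (transpose_mat B * A * B) = transpose_mat B * transpose_mat (transpose_mat B * A)"
    using transpose_mult[of "transpose_mat B * A" k n B k] A B by simp
  also have "transpose_mat (transpose_mat B * A) = A * B"
    using transpose_mult[of "transpose_mat B" k n A n] A B sym by simp
  also have "transpose_mat B * (A * B) = transpose_mat B * A * B"
    using A B by (simp add: assoc_mult_mat[of _ k n _ n _ k])
  finally show ?thesis .
qed

lemma transpose_congruence_mult:
  fixes A W F :: "'a::comm_ring_1 mat"
  assumes A: "A \<in> carrier_mat n n" and W: "W \<in> carrier_mat n n" and F: "F \<in> carrier_mat n n"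
  shows "transpose_mat (W * F) * A * (W * F) = transpose_mat F * (transpose_mat W * A * W) * F"
  using A W F by (simp add: transpose_mult[OF W F] assoc_mult_mat[of _ n n _ n _ n])

lemma symmetric_mat_deflation:
  fixes A W :: "real mat"
  assumes A: "A \<in> carrier_mat (Suc m) (Suc m)" and sym: "transpose_mat A = A"
    and W: "W \<in> carrier_mat (Suc m) (Suc m)" and orth: "transpose_mat W * W = 1\<^sub>m (Suc m)"
    and eigen: "A *\<^sub>v col W 0 = e \<cdot>\<^sub>v col W 0"
  obtains B where "B \<in> carrier_mat m m" "transpose_mat B = B"
    and "transpose_mat W * A * W = four_block_mat (mat 1 1 (\<lambda>_. e)) (0\<^sub>m 1 m) (0\<^sub>m m 1) B"
proof -
  define A' where "A' = transpose_mat W * A * W"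
  have A': "A' \<in> carrier_mat (Suc m) (Suc m)"
    unfolding A'_def using A W by simp
  have sym': "transpose_mat A' = A'"
    unfolding A'_def using transpose_congruence_symmetric[OF A W sym] .
  have col0: "A' $$ (i, 0) = (if i = 0 then e else 0)" if i: "i < Suc m" for i
  proof -
    have "A' $$ (i, 0) = col W i \<bullet> (A *\<^sub>v col W 0)"
      unfolding A'_def using A W i by (simp add: assoc_mult_mat[of _ "Suc m" "Suc m" _ "Suc m" _ "Suc m"] mult_mat_vec_def)
    also have "\<dots> = e * (transpose_mat W * W) $$ (i, 0)"
      unfolding eigen using W i by simp
    finally show ?thesis
      unfolding orth using i by simp
  qed
  have row0: "A' $$ (0, j) = (if j = 0 then e else 0)" if "j < Suc m" for j
    using col0[OF that] sym' A' that by (metis carrier_matD index_transpose_mat(1) zero_less_Suc)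
  define B where "B = mat m m (\<lambda>(i, j). A' $$ (Suc i, Suc j))"
  show thesis
  proof
    show "B \<in> carrier_mat m m"
      unfolding B_def by simp
    show "transpose_mat B = B"
      unfolding B_def by (rule eq_matI)
        (use sym' A' in \<open>auto, metis carrier_matD index_transpose_mat(1) Suc_mono\<close>)
    show "transpose_mat W * A * W = four_block_mat (mat 1 1 (\<lambda>_. e)) (0\<^sub>m 1 m) (0\<^sub>m m 1) B"
      unfolding A'_def[symmetric] by (rule eq_matI) (use A' in \<open>auto simp: B_def col0 row0\<close>)
  qed
qed

lemma four_block_congruence:
  fixes Q B :: "'a::comm_ring_1 mat"
  assumes Q: "Q \<in> carrier_mat m m" and B: "B \<in> carrier_mat m m"
  defines "F \<equiv> four_block_mat (1\<^sub>m 1) (0\<^sub>m 1 m) (0\<^sub>m m 1) Q"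
  shows "transpose_mat F * four_block_mat (mat 1 1 (\<lambda>_. e)) (0\<^sub>m 1 m) (0\<^sub>m m 1) B * F
    = four_block_mat (mat 1 1 (\<lambda>_. e)) (0\<^sub>m 1 m) (0\<^sub>m m 1) (transpose_mat Q * B * Q)"
proof -
  have "transpose_mat F = four_block_mat (1\<^sub>m 1) (0\<^sub>m 1 m) (0\<^sub>m m 1) (transpose_mat Q)"
    unfolding F_def using Q by (subst transpose_four_block_mat[of _ 1 1 _ m _ m]) auto
  then show ?thesis
    unfolding F_def using Q B by (simp add: mult_four_block_mat[of _ 1 1 _ m _ m _ _ 1 _ m])
qed

lemma real_symmetric_mat_orthogonal_diagonalization:
  fixes A :: "real mat"
  assumes "A \<in> carrier_mat n n" and "transpose_mat A = A"
  shows "\<exists>P d. P \<in> carrier_mat n n \<and> transpose_mat P * P = 1\<^sub>m n \<and>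
    transpose_mat P * A * P = mat_diag n d"
  using assms
proof (induction n arbitrary: A)
  case 0
  then have "transpose_mat (1\<^sub>m 0) * A * 1\<^sub>m 0 = mat_diag 0 (\<lambda>_. 0)"
    by (auto intro!: eq_matI simp: mat_diag_def)
  then show ?case by (intro exI[of _ "1\<^sub>m 0"] exI[of _ "\<lambda>_. 0::real"]) simp
next
  case (Suc m A)
  obtain e where "eigenvalue A e"
    using real_symmetric_mat_has_eigenvalue[OF Suc.prems] by blast
  then obtain v where v: "v \<in> carrier_vec (Suc m)" "v \<noteq> 0\<^sub>v (Suc m)" "A *\<^sub>v v = e \<cdot>\<^sub>v v"
    using Suc.prems(1) unfolding eigenvalue_def eigenvector_def by auto
  obtain W where W: "W \<in> carrier_mat (Suc m) (Suc m)" "transpose_mat W * W = 1\<^sub>m (Suc m)"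
    and W0: "col W 0 = (1 / sqrt (v \<bullet> v)) \<cdot>\<^sub>v v"
    using orthonormal_extension[OF v(1,2)] by blast
  have "A *\<^sub>v col W 0 = e \<cdot>\<^sub>v col W 0"
    unfolding W0 using Suc.prems(1) v by (simp add: mult_mat_vec smult_smult_assoc mult.commute)
  then obtain B where B: "B \<in> carrier_mat m m" "transpose_mat B = B"
    and WAW: "transpose_mat W * A * W = four_block_mat (mat 1 1 (\<lambda>_. e)) (0\<^sub>m 1 m) (0\<^sub>m m 1) B"
    using symmetric_mat_deflation[OF Suc.prems W] by blast
  obtain Q d where Q: "Q \<in> carrier_mat m m" "transpose_mat Q * Q = 1\<^sub>m m"
    and QBQ: "transpose_mat Q * B * Q = mat_diag m d"
    using Suc.IH[OF B] by blast
  define F where "F = four_block_mat (1\<^sub>m 1) (0\<^sub>m 1 m) (0\<^sub>m m 1) Q"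
  have F: "F \<in> carrier_mat (Suc m) (Suc m)"
    unfolding F_def using Q by auto
  have one: "1\<^sub>m (Suc m) = four_block_mat (mat 1 1 (\<lambda>_. 1)) (0\<^sub>m 1 m) (0\<^sub>m m 1) (1\<^sub>m m)"
    by (rule eq_matI) auto
  have "transpose_mat (W * F) * (W * F) = transpose_mat F * (transpose_mat W * 1\<^sub>m (Suc m) * W) * F"
    using transpose_congruence_mult[OF one_carrier_mat W(1) F] W F by simp
  also have "\<dots> = 1\<^sub>m (Suc m)"
    using four_block_congruence[OF Q(1) one_carrier_mat, of 1] W Q unfolding F_def one[symmetric]
    by (simp, auto intro!: eq_matI)
  finally have orth: "transpose_mat (W * F) * (W * F) = 1\<^sub>m (Suc m)" .
  have "transpose_mat (W * F) * A * (W * F) = transpose_mat F * (transpose_mat W * A * W) * F"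
    using transpose_congruence_mult[OF Suc.prems(1) W(1) F] .
  also have "\<dots> = mat_diag (Suc m) (\<lambda>i. if i = 0 then e else d (i - 1))"
    unfolding WAW F_def four_block_congruence[OF Q(1) B(1)] QBQ
    by (rule eq_matI) (auto simp: mat_diag_def)
  finally have "transpose_mat (W * F) * A * (W * F) = mat_diag (Suc m) (\<lambda>i. if i = 0 then e else d (i - 1))" .
  moreover have "W * F \<in> carrier_mat (Suc m) (Suc m)"
    using W F by simp
  ultimately show ?case
    using orth by blast
qed

lemma real_symmetric_mat_spectral_decomposition:
  fixes A :: "real mat"
  assumes A: "A \<in> carrier_mat n n" and sym: "transpose_mat A = A"
  obtains P d where "P \<in> carrier_mat n n" "transpose_mat P * P = 1\<^sub>m n" "P * transpose_mat P = 1\<^sub>m n"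
    and "A = P * mat_diag n d * transpose_mat P"
proof -
  obtain P d where P: "P \<in> carrier_mat n n" and PtP: "transpose_mat P * P = 1\<^sub>m n"
    and PAP: "transpose_mat P * A * P = mat_diag n d"
    using real_symmetric_mat_orthogonal_diagonalization[OF A sym] by blast
  have Pt: "transpose_mat P \<in> carrier_mat n n"
    using P by simp
  have PPt: "P * transpose_mat P = 1\<^sub>m n"
    using mat_mult_left_right_inverse[OF Pt P PtP] .
  have "P * (transpose_mat P * A * P) * transpose_mat P = (P * transpose_mat P) * A * (P * transpose_mat P)"
    using P A by (simp add: assoc_mult_mat[of _ n n _ n _ n])
  then have "A = P * mat_diag n d * transpose_mat P"
    unfolding PAP PPt using A by simp
  then show thesis
    using that P PtP PPt by blast
qed

lemma char_poly_spectral_decomposition: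
  fixes A P :: "'a::field mat"
  assumes A: "A \<in> carrier_mat n n" and P: "P \<in> carrier_mat n n"
    and orth: "transpose_mat P * P = 1\<^sub>m n" "P * transpose_mat P = 1\<^sub>m n"
    and decomp: "A = P * mat_diag n d * transpose_mat P"
  shows "char_poly A = (\<Prod>l<n. [:- d l, 1:])"
proof -
  have "similar_mat A (mat_diag n d)"
    unfolding similar_mat_def similar_mat_wit_def
    using A P orth decomp by (intro exI[of _ P] exI[of _ "transpose_mat P"]) (auto simp: Let_def)
  then have "char_poly A = char_poly (mat_diag n d)"
    by (rule char_poly_similar)
  also have "\<dots> = (\<Prod>a\<leftarrow>diag_mat (mat_diag n d). [:- a, 1:])"
    by (rule char_poly_upper_triangular) (auto simp: upper_triangular_def mat_diag_def)
  also have "\<dots> = (\<Prod>l<n. [:- d l, 1:])"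
    by (simp add: diag_mat_def mat_diag_def prod.distinct_set_conv_list[symmetric, of "[0..<n]", simplified]
        comp_def lessThan_atLeast0)
  finally show ?thesis .
qed

lemma order_linear_factor: "Polynomial.order a [:- b, 1:] = (if a = b then 1 else 0)"
  using order_power_n_n[of a 1] by (auto simp: order_0I)

lemma order_prod_linear_factors:
  fixes d :: "'b \<Rightarrow> 'a::idom"
  assumes "finite I"
  shows "Polynomial.order a (\<Prod>l\<in>I. [:- d l, 1:]) = card {l\<in>I. d l = a}"
  using assms
proof (induction I rule: finite_induct)
  case empty
  then show ?case by (simp add: order_0I)
next
  case (insert x I)
  have split: "(\<Prod>l\<in>insert x I. [:- d l, 1:]) = [:- d x, 1:] * (\<Prod>l\<in>I. [:- d l, 1:])"
    using insert by simp
  have "(\<Prod>l\<in>I. [:- d l, 1:]) \<noteq> 0"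
    using insert by simp
  then have "[:- d x, 1:] * (\<Prod>l\<in>I. [:- d l, 1:]) \<noteq> 0"
    by (intro no_zero_divisors) simp_all
  then have "Polynomial.order a (\<Prod>l\<in>insert x I. [:- d l, 1:])
      = Polynomial.order a [:- d x, 1:] + Polynomial.order a (\<Prod>l\<in>I. [:- d l, 1:])"
    unfolding split by (rule order_mult)
  also have "\<dots> = card {l\<in>insert x I. d l = a}"
  proof -
    have "{l\<in>insert x I. d l = a} = (if d x = a then insert x {l\<in>I. d l = a} else {l\<in>I. d l = a})"
      by auto
    then show ?thesis
      unfolding order_linear_factor insert.IH using insert by simp
  qed
  finally show ?case .
qed

lemma inertia_of_split_char_poly:
  fixes A :: "real mat" and n :: nat
  assumes cp: "char_poly A = (\<Prod>l<n. [:- d l, 1:])"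
  shows "pos_inertia A = card {l\<in>{..<n}. 0 < d l}" and "neg_inertia A = card {l\<in>{..<n}. d l < 0}"
proof -
  have root: "poly (char_poly A) a = 0 \<longleftrightarrow> (\<exists>l<n. d l = a)" for a
    unfolding cp poly_prod by (subst prod_zero_iff) auto
  have inertia: "(\<Sum>a\<in>{a. Q a \<and> poly (char_poly A) a = 0}. Polynomial.order a (char_poly A)) =
      card {l\<in>{..<n}. Q (d l)}" for Q
  proof -
    define S where "S = {l\<in>{..<n}. Q (d l)}"
    have roots: "{a. Q a \<and> poly (char_poly A) a = 0} = d ` S"
      unfolding S_def root by auto
    have "(\<Sum>a\<in>d ` S. Polynomial.order a (char_poly A)) = (\<Sum>a\<in>d ` S. card {l\<in>S. d l = a})"
    proof (intro sum.cong refl)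
      fix a assume "a \<in> d ` S"
      then have "{l\<in>{..<n}. d l = a} = {l\<in>S. d l = a}"
        unfolding S_def by auto
      then show "Polynomial.order a (char_poly A) = card {l\<in>S. d l = a}"
        unfolding cp by (simp add: order_prod_linear_factors)
    qed
    also have "\<dots> = card S"
      using sum.image_gen[of S "\<lambda>_. 1::nat" d] unfolding S_def by simp
    finally show ?thesis
      unfolding roots S_def .
  qed
  show "pos_inertia A = card {l\<in>{..<n}. 0 < d l}"
    unfolding pos_inertia_def using inertia[of "\<lambda>a. 0 < a"] by simp
  show "neg_inertia A = card {l\<in>{..<n}. d l < 0}"
    unfolding neg_inertia_def using inertia[of "\<lambda>a. a < 0"] by simp
qed

section \<open>Diagonal forms of Lorentzian signature\<close>

definition diag_form :: "nat \<Rightarrow> (nat \<Rightarrow> real) \<Rightarrow> (nat \<Rightarrow> real) \<Rightarrow> (nat \<Rightarrow> real) \<Rightarrow> real" where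
  "diag_form n d x y = (\<Sum>i<n. d i * x i * y i)"

definition lorentzian_weights :: "nat \<Rightarrow> (nat \<Rightarrow> real) \<Rightarrow> bool" where
  "lorentzian_weights n d \<longleftrightarrow> (\<exists>k<n. d k < 0 \<and> (\<forall>i<n. i \<noteq> k \<longrightarrow> 0 < d i))"

lemma diag_form_commute: "diag_form n d x y = diag_form n d y x"
  unfolding diag_form_def by (simp add: ac_simps)

lemma diag_form_linear_left:
  "diag_form n d (\<lambda>i. a * x i + b * y i) z = a * diag_form n d x z + b * diag_form n d y z"
  unfolding diag_form_def by (simp add: sum.distrib sum_distrib_left algebra_simps)

lemma diag_form_linear_right:
  "diag_form n d z (\<lambda>i. a * x i + b * y i) = a * diag_form n d z x + b * diag_form n d z y"
  using diag_form_linear_left diag_form_commute by metis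

lemma diag_form_eq_0: "\<forall>i<n. x i = 0 \<Longrightarrow> diag_form n d x y = 0"
  unfolding diag_form_def by simp

lemma diag_form_pos_off_index:
  assumes pos: "\<forall>i<n. i \<noteq> k \<longrightarrow> 0 < d i" and "x k = 0"
  shows "0 \<le> diag_form n d x x"
    and "\<exists>i<n. x i \<noteq> 0 \<Longrightarrow> 0 < diag_form n d x x"
proof -
  have term_nonneg: "0 \<le> d i * x i * x i" if "i < n" for i
    using pos that \<open>x k = 0\<close> by (cases "i = k") (auto simp: mult.assoc)
  then show "0 \<le> diag_form n d x x"
    unfolding diag_form_def by (intro sum_nonneg) simp
  assume "\<exists>i<n. x i \<noteq> 0"
  then obtain i where i: "i < n" "x i \<noteq> 0" by blast
  moreover have "0 < d i"
    using pos i \<open>x k = 0\<close> by (metis (mono_tags))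
  ultimately have "0 < d i * x i * x i"
    by (metis mult_neg_neg mult_pos_pos mult_less_0_iff linorder_neqE_linordered_idom)
  then show "0 < diag_form n d x x"
    unfolding diag_form_def using i term_nonneg by (intro sum_pos2[of _ i]) auto
qed

lemma lorentzian_orthogonal_pos:
  assumes "lorentzian_weights n d" and y: "diag_form n d y y < 0"
    and uy: "diag_form n d u y = 0" and u: "\<exists>i<n. u i \<noteq> 0"
  shows "0 < diag_form n d u u"
proof -
  obtain k where k: "k < n" and pos: "\<forall>i<n. i \<noteq> k \<longrightarrow> 0 < d i"
    using assms(1) unfolding lorentzian_weights_def by blast
  have "y k \<noteq> 0"
    using diag_form_pos_off_index(1)[OF pos, of y] y by force
  \<comment> \<open>\<open>z\<close> has no component along the negative axis \<open>k\<close>, so it is spacelike or zero\<close>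
  define t where "t = u k / y k"
  define z where "z = (\<lambda>i. 1 * u i + (- t) * y i)"
  have "z k = 0"
    unfolding z_def t_def using \<open>y k \<noteq> 0\<close> by simp
  have u_split: "u = (\<lambda>i. 1 * z i + t * y i)"
    unfolding z_def by simp
  have zy: "diag_form n d z y = - t * diag_form n d y y"
    unfolding z_def diag_form_linear_left uy by simp
  have uu: "diag_form n d u u = diag_form n d z z - t\<^sup>2 * diag_form n d y y"
    by (subst (1 2) u_split, simp only: diag_form_linear_left diag_form_linear_right)
      (simp add: diag_form_commute[of n d y z] zy power2_eq_square algebra_simps)
  show ?thesis
  proof (cases "\<exists>i<n. z i \<noteq> 0")
    case True
    then have "0 < diag_form n d z z"
      using diag_form_pos_off_index(2)[OF pos, of z] \<open>z k = 0\<close> by blast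
    moreover have "0 \<le> - t\<^sup>2 * diag_form n d y y"
      using y by (simp add: mult_nonneg_nonpos)
    ultimately show ?thesis
      unfolding uu by linarith
  next
    case False
    then have "diag_form n d u y = t * diag_form n d y y"
      by (subst u_split, simp only: diag_form_linear_left) (simp add: diag_form_eq_0)
    then have "t = 0"
      using uy y by simp
    then show ?thesis
      using False u unfolding z_def by simp
  qed
qed

lemma lorentzian_orthogonal_nonneg:
  assumes "lorentzian_weights n d" "diag_form n d y y < 0" "diag_form n d u y = 0"
  shows "0 \<le> diag_form n d u u"
  using lorentzian_orthogonal_pos[OF assms] diag_form_eq_0[of n u d u] by fastforce

lemma lorentzian_orthogonal_cauchy_schwarz:
  assumes lor: "lorentzian_weights n d" and y: "diag_form n d y y < 0"
    and uy: "diag_form n d u y = 0" and xy: "diag_form n d x y = 0"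
  shows "(diag_form n d u x)\<^sup>2 \<le> diag_form n d u u * diag_form n d x x"
proof -
  define p where "p = diag_form n d x x"
  define r where "r = diag_form n d u x"
  have "0 \<le> p"
    unfolding p_def using lorentzian_orthogonal_nonneg[OF lor y xy] .
  show ?thesis
  proof (cases "p = 0")
    case True
    then have "\<forall>i<n. x i = 0"
      using lorentzian_orthogonal_pos[OF lor y xy] unfolding p_def by fastforce
    then show ?thesis
      using diag_form_eq_0[of n x d u] diag_form_commute[of n d u x] True unfolding p_def by simp
  next
    case False
    define w where "w = (\<lambda>i. p * u i + (- r) * x i)"
    have "diag_form n d w y = 0"
      unfolding w_def diag_form_linear_left uy xy by simp
    moreover have "diag_form n d w w = p * (p * diag_form n d u u - r\<^sup>2)"
      unfolding w_def diag_form_linear_left diag_form_linear_right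
      using diag_form_commute[of n d x u] unfolding r_def p_def
      by (simp add: power2_eq_square algebra_simps)
    ultimately have "0 \<le> p * (p * diag_form n d u u - r\<^sup>2)"
      using lorentzian_orthogonal_nonneg[OF lor y] by metis
    then have "r\<^sup>2 \<le> p * diag_form n d u u"
      using False \<open>0 \<le> p\<close> by (simp add: zero_le_mult_iff)
    then show ?thesis
      unfolding r_def p_def by (simp add: mult.commute)
  qed
qed

lemma lorentzian_update_pos:
  assumes lor: "lorentzian_weights n d" and xy: "diag_form n d x y = 0"
    and gap: "diag_form n d y y < diag_form n d x x"
    and timelike: "diag_form n d x x + diag_form n d y y < 0"
    and v: "\<exists>i<n. v i \<noteq> 0"
  shows "0 < diag_form n d v v
    - 2 * ((diag_form n d v x)\<^sup>2 - (diag_form n d v y)\<^sup>2) / (diag_form n d x x - diag_form n d y y)"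
    (is "0 < ?E")
proof -
  define p where "p = diag_form n d x x"
  define q where "q = diag_form n d y y"
  have "q < 0" "0 < p - q" "p + q < 0"
    using gap timelike unfolding p_def q_def by linarith+
  define t where "t = diag_form n d v y / q"
  define u where "u = (\<lambda>i. 1 * v i + (- t) * y i)"
  have uy: "diag_form n d u y = 0"
    unfolding u_def diag_form_linear_left t_def using \<open>q < 0\<close> unfolding q_def by simp
  have v_split: "v = (\<lambda>i. 1 * u i + t * y i)"
    unfolding u_def by simp
  have vv: "diag_form n d v v = diag_form n d u u + t\<^sup>2 * q"
    by (subst (1 2) v_split, simp only: diag_form_linear_left diag_form_linear_right)
      (simp add: diag_form_commute[of n d y u] uy q_def power2_eq_square algebra_simps)
  have vx: "diag_form n d v x = diag_form n d u x"
    by (subst v_split, simp only: diag_form_linear_left) (simp add: diag_form_commute[of n d y x] xy)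
  have vy: "diag_form n d v y = t * q"
    by (subst v_split, simp only: diag_form_linear_left) (simp add: uy q_def)
  have uu: "0 \<le> diag_form n d u u"
    using lorentzian_orthogonal_nonneg[OF lor \<open>q < 0\<close>[unfolded q_def] uy] .
  have cs: "(diag_form n d u x)\<^sup>2 \<le> diag_form n d u u * p"
    unfolding p_def using lorentzian_orthogonal_cauchy_schwarz[OF lor \<open>q < 0\<close>[unfolded q_def] uy xy] .
  have "?E * (p - q) = t\<^sup>2 * q * (p + q) + (diag_form n d u u * (p - q) - 2 * (diag_form n d u x)\<^sup>2)"
    unfolding vv vx vy p_def[symmetric] q_def[symmetric] using \<open>0 < p - q\<close>
    by (simp add: field_simps power2_eq_square)
  also have "\<dots> \<ge> t\<^sup>2 * q * (p + q) - diag_form n d u u * (p + q)"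
    using cs by (simp add: algebra_simps)
  finally have lower: "t\<^sup>2 * q * (p + q) - diag_form n d u u * (p + q) \<le> ?E * (p - q)" .
  have "0 < t\<^sup>2 * q * (p + q) - diag_form n d u u * (p + q)"
  proof (cases "t = 0")
    case True
    then have "0 < diag_form n d u u"
      using lorentzian_orthogonal_pos[OF lor \<open>q < 0\<close>[unfolded q_def] uy] v unfolding u_def by simp
    then show ?thesis
      using True \<open>p + q < 0\<close> by (simp add: mult_pos_neg)
  next
    case False
    then have "0 < t\<^sup>2 * (q * (p + q))"
      using \<open>q < 0\<close> \<open>p + q < 0\<close> by (simp add: mult_neg_neg)
    moreover have "0 \<le> - diag_form n d u u * (p + q)"
      using uu \<open>p + q < 0\<close> by (simp add: mult_nonneg_nonpos)
    ultimately show ?thesis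
      by (simp add: algebra_simps)
  qed
  then show ?thesis
    using lower \<open>0 < p - q\<close> by (smt (verit) zero_less_mult_iff)
qed

lemma weighted_sum_square_complex:
  "(\<Sum>i<n. of_real (d i) * (z i)\<^sup>2) =
    Complex
      (diag_form n d (\<lambda>i. Re (z i)) (\<lambda>i. Re (z i)) - diag_form n d (\<lambda>i. Im (z i)) (\<lambda>i. Im (z i)))
      (2 * diag_form n d (\<lambda>i. Re (z i)) (\<lambda>i. Im (z i)))"
  unfolding diag_form_def
  by (simp add: complex_eq_iff Re_sum Im_sum power2_eq_square sum_subtractf sum_distrib_left algebra_simps)

lemma weighted_sum_norm_square:
  "(\<Sum>i<n. d i * (cmod (z i))\<^sup>2) =
    diag_form n d (\<lambda>i. Re (z i)) (\<lambda>i. Re (z i)) + diag_form n d (\<lambda>i. Im (z i)) (\<lambda>i. Im (z i))"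
  unfolding diag_form_def cmod_power2 by (simp add: sum.distrib algebra_simps power2_eq_square)

lemma weighted_sum_product_complex:
  "(\<Sum>i<n. of_real (d i) * z i * of_real (v i)) =
    Complex (diag_form n d v (\<lambda>i. Re (z i))) (diag_form n d v (\<lambda>i. Im (z i)))"
  unfolding diag_form_def by (simp add: complex_eq_iff Re_sum Im_sum algebra_simps)

lemma lorentzian_complex_square_nonzero:
  assumes lor: "lorentzian_weights n d" and neg: "(\<Sum>i<n. d i * (cmod (z i))\<^sup>2) < 0"
  shows "(\<Sum>i<n. of_real (d i) * (z i)\<^sup>2) \<noteq> 0"
proof
  let ?x = "\<lambda>i. Re (z i)" and ?y = "\<lambda>i. Im (z i)"
  assume "(\<Sum>i<n. of_real (d i) * (z i)\<^sup>2) = 0"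
  then have "diag_form n d ?x ?x = diag_form n d ?y ?y" and xy: "diag_form n d ?x ?y = 0"
    unfolding weighted_sum_square_complex by (simp_all add: complex_eq_iff)
  moreover have "diag_form n d ?x ?x + diag_form n d ?y ?y < 0"
    using neg unfolding weighted_sum_norm_square .
  ultimately show False
    using lorentzian_orthogonal_nonneg[OF lor _ xy] by linarith
qed

lemma unimodular_rotation_to_norm:
  fixes a :: complex
  assumes "a \<noteq> 0"
  obtains w where "cmod w = 1" and "w\<^sup>2 * a = of_real (cmod a)"
proof -
  define w where "w = csqrt (cnj a / of_real (cmod a))"
  have w2: "w\<^sup>2 = cnj a / of_real (cmod a)"
    unfolding w_def by simp
  have "cmod w ^ 2 = cmod (w\<^sup>2)"
    by (simp add: norm_power)
  also have "\<dots> = 1"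
    unfolding w2 using assms by (simp add: norm_divide)
  finally have "cmod w = 1"
    using norm_ge_zero[of w] by (auto simp: power2_eq_1_iff)
  moreover have "w\<^sup>2 * a = of_real (cmod a)"
  proof -
    have "w\<^sup>2 * a = a * cnj a / of_real (cmod a)"
      unfolding w2 by simp
    also have "a * cnj a = of_real (cmod a) * of_real (cmod a)"
      unfolding complex_norm_square[symmetric] by (simp add: power2_eq_square)
    also have "\<dots> / of_real (cmod a) = of_real (cmod a)"
      using assms by (intro nonzero_mult_div_cancel_right) simp
    finally show ?thesis .
  qed
  ultimately show thesis
    using that by blast
qed

lemma lorentzian_complex_update_pos:
  assumes lor: "lorentzian_weights n d" and neg: "(\<Sum>i<n. d i * (cmod (z i))\<^sup>2) < 0"
    and v: "\<exists>i<n. v i \<noteq> 0"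
  shows "0 < diag_form n d v v +
    Re (- 2 / (\<Sum>i<n. of_real (d i) * (z i)\<^sup>2) * (\<Sum>i<n. of_real (d i) * z i * of_real (v i))\<^sup>2)"
proof -
  define l where "l = (\<Sum>i<n. of_real (d i) * (z i)\<^sup>2)"
  define s where "s = (\<Sum>i<n. of_real (d i) * z i * of_real (v i))"
  have "l \<noteq> 0"
    unfolding l_def using lorentzian_complex_square_nonzero[OF lor neg] .
  then obtain w where w: "cmod w = 1" "w\<^sup>2 * l = of_real (cmod l)"
    using unimodular_rotation_to_norm by blast
  define x where "x = (\<lambda>i. Re (w * z i))"
  define y where "y = (\<lambda>i. Im (w * z i))"
  have "(\<Sum>i<n. of_real (d i) * (w * z i)\<^sup>2) = w\<^sup>2 * l"
    unfolding l_def by (simp add: sum_distrib_left power_mult_distrib algebra_simps)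
  then have gap: "diag_form n d x x - diag_form n d y y = cmod l" and xy: "diag_form n d x y = 0"
    unfolding weighted_sum_square_complex w(2) x_def y_def by (simp_all add: complex_eq_iff)
  have "diag_form n d x x + diag_form n d y y = (\<Sum>i<n. d i * (cmod (z i))\<^sup>2)"
    unfolding x_def y_def weighted_sum_norm_square[symmetric] by (simp add: norm_mult w(1))
  then have timelike: "diag_form n d x x + diag_form n d y y < 0"
    using neg by simp
  have "w * s = (\<Sum>i<n. of_real (d i) * (w * z i) * of_real (v i))"
    unfolding s_def by (simp add: sum_distrib_left algebra_simps)
  also have "\<dots> = Complex (diag_form n d v x) (diag_form n d v y)"
    unfolding weighted_sum_product_complex x_def y_def ..
  finally have ws: "w * s = Complex (diag_form n d v x) (diag_form n d v y)" .
  have "- 2 / l * s\<^sup>2 = - 2 / (w\<^sup>2 * l) * (w * s)\<^sup>2"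
    using \<open>l \<noteq> 0\<close> w(1) by (auto simp: field_simps power2_eq_square)
  also have "\<dots> = of_real (- 2 / cmod l) * (Complex (diag_form n d v x) (diag_form n d v y))\<^sup>2"
    unfolding w(2) ws by simp
  finally have re: "Re (- 2 / l * s\<^sup>2) =
      - (2 * ((diag_form n d v x)\<^sup>2 - (diag_form n d v y)\<^sup>2) / cmod l)"
    by (simp add: power2_eq_square)
  have "0 < cmod l"
    using \<open>l \<noteq> 0\<close> by simp
  then have "diag_form n d y y < diag_form n d x x"
    using gap by linarith
  from lorentzian_update_pos[OF lor xy this timelike v] re show ?thesis
    unfolding l_def[symmetric] s_def[symmetric] gap by linarith
qed

lemma lorentzian_weights_of_signature:
  fixes A :: "real mat" and n :: nat
  assumes cp: "char_poly A = (\<Prod>l<n. [:- d l, 1:])" and sig: "has_signature A (n - 1) 1"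
  shows "lorentzian_weights n d"
proof -
  let ?pos = "{l\<in>{..<n}. 0 < d l}" and ?neg = "{l\<in>{..<n}. d l < 0}"
  have card_pos: "card ?pos = n - 1" and card_neg: "card ?neg = 1"
    using sig inertia_of_split_char_poly[OF cp] unfolding has_signature_def by auto
  then obtain k where k: "?neg = {k}"
    using card_1_singletonE by blast
  then have "k < n" "d k < 0"
    by auto
  have "card (?pos \<union> ?neg) = card ?pos + card ?neg"
    by (rule card_Un_disjoint) auto
  then have "card (?pos \<union> ?neg) = card {..<n}"
    using card_pos card_neg \<open>k < n\<close> by simp
  then have all: "?pos \<union> ?neg = {..<n}"
    by (intro card_subset_eq) auto
  have "0 < d i" if "i < n" "i \<noteq> k" for i
  proof -
    have "i \<in> ?pos \<union> ?neg"
      using all that(1) by simp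
    then show ?thesis
      using k that(2) by auto
  qed
  then show ?thesis
    unfolding lorentzian_weights_def using \<open>k < n\<close> \<open>d k < 0\<close> by blast
qed

section \<open>Quadratic forms in diagonalizing coordinates\<close>

lemma mat_diag_mult_vec:
  assumes "u \<in> carrier_vec n"
  shows "mat_diag n d *\<^sub>v u = vec n (\<lambda>l. d l * u $ l)"
proof (rule eq_vecI, insert assms, auto simp: mat_diag_def scalar_prod_def, goal_cases)
  case (1 i)
  then show ?case by (subst sum.remove[of _ i]) auto
qed

lemma scalar_prod_diag_congruence:
  fixes A P :: "'a::comm_ring_1 mat"
  assumes P: "P \<in> carrier_mat n n" and A: "A = P * mat_diag n d * transpose_mat P"
    and a: "a \<in> carrier_vec n" and b: "b \<in> carrier_vec n"
  shows "a \<bullet> (A *\<^sub>v b) = (\<Sum>l<n. d l * (transpose_mat P *\<^sub>v a) $ l * (transpose_mat P *\<^sub>v b) $ l)"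
proof -
  let ?b = "transpose_mat P *\<^sub>v b"
  have "A *\<^sub>v b = P *\<^sub>v (mat_diag n d *\<^sub>v ?b)"
    unfolding A using P b by (simp add: assoc_mult_mat_vec[of _ n n _ n])
  moreover have "mat_diag n d *\<^sub>v ?b \<in> carrier_vec n"
    using P b by (intro mult_mat_vec_carrier[of _ n n]) auto
  ultimately have "a \<bullet> (A *\<^sub>v b) = (transpose_mat P *\<^sub>v a) \<bullet> (mat_diag n d *\<^sub>v ?b)"
    using transpose_vec_mult_scalar[OF P _ a] by simp
  also have "\<dots> = (\<Sum>l<n. d l * (transpose_mat P *\<^sub>v a) $ l * ?b $ l)"
    using P b by (simp add: mat_diag_mult_vec scalar_prod_def lessThan_atLeast0 algebra_simps)
  finally show ?thesis .
qed

lemma of_real_diag_congruence: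
  fixes P :: "real mat"
  assumes "P \<in> carrier_mat n n"
  shows "map_mat of_real (P * mat_diag n d * transpose_mat P) =
    map_mat of_real P * mat_diag n (\<lambda>l. of_real (d l)) * transpose_mat (map_mat of_real P)"
proof -
  have "map_mat of_real (P * mat_diag n d * transpose_mat P) =
      map_mat of_real P * map_mat of_real (mat_diag n d) * map_mat of_real (transpose_mat P)"
    using assms by (simp add: of_real_hom.mat_hom_mult[of _ n n _ n])
  also have "map_mat of_real (mat_diag n d) = mat_diag n (\<lambda>l. of_real (d l))"
    by (rule eq_matI) (auto simp: mat_diag_def)
  finally show ?thesis
    by (simp add: map_mat_transpose)
qed

lemma orthogonal_coordinates_nonzero:
  fixes P :: "'a::comm_ring_1 mat"
  assumes P: "P \<in> carrier_mat n n" "P * transpose_mat P = 1\<^sub>m n"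
    and v: "v \<in> carrier_vec n" "v \<noteq> 0\<^sub>v n"
  shows "\<exists>l<n. (transpose_mat P *\<^sub>v v) $ l \<noteq> 0"
proof (rule ccontr)
  assume "\<not> (\<exists>l<n. (transpose_mat P *\<^sub>v v) $ l \<noteq> 0)"
  then have "transpose_mat P *\<^sub>v v = 0\<^sub>v n"
    using P by (intro eq_vecI) auto
  have "v = (P * transpose_mat P) *\<^sub>v v"
    unfolding P(2) using v by simp
  also have "\<dots> = P *\<^sub>v (transpose_mat P *\<^sub>v v)"
    using P(1) v(1) by (intro assoc_mult_mat_vec) auto
  also have "\<dots> = 0\<^sub>v n"
    unfolding \<open>transpose_mat P *\<^sub>v v = 0\<^sub>v n\<close> using P(1) by auto
  finally show False
    using v by simp
qed

lemma quadratic_form_sandwich: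
  fixes M R :: "'a::comm_ring_1 mat"
  assumes M: "M \<in> carrier_mat n n" and sym: "transpose_mat M = M"
    and R: "R \<in> carrier_mat n n" and v: "v \<in> carrier_vec n"
  shows "v \<bullet> ((M + M * R * M) *\<^sub>v v) = v \<bullet> (M *\<^sub>v v) + (M *\<^sub>v v) \<bullet> (R *\<^sub>v (M *\<^sub>v v))"
proof -
  have "(M * R * M) *\<^sub>v v = M *\<^sub>v (R *\<^sub>v (M *\<^sub>v v))"
    using M R v by (simp add: assoc_mult_mat_vec[of _ n n _ n])
  moreover have "v \<bullet> (M *\<^sub>v (R *\<^sub>v (M *\<^sub>v v))) = (M *\<^sub>v v) \<bullet> (R *\<^sub>v (M *\<^sub>v v))"
    using transpose_vec_mult_scalar[of M n n "R *\<^sub>v (M *\<^sub>v v)" v] M R v sym by simp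
  ultimately show ?thesis
    using M R v by (simp add: add_mult_distrib_mat_vec[of _ n n] scalar_prod_add_distrib[of _ n])
qed

lemma symmetric_sandwich:
  fixes M R :: "'a::comm_ring_1 mat"
  assumes M: "M \<in> carrier_mat n n" "transpose_mat M = M" and R: "R \<in> carrier_mat n n" "transpose_mat R = R"
  shows "transpose_mat (M + M * R * M) = M + M * R * M"
  using transpose_congruence_symmetric[OF R(1) M(1) R(2)] M R by (simp add: transpose_add)

lemma quadratic_form_rank_one_real_part:
  fixes c :: "complex vec" and w :: "real vec"
  assumes c: "c \<in> carrier_vec n" and w: "w \<in> carrier_vec n"
  shows "w \<bullet> (map_mat Re (k \<cdot>\<^sub>m mat n n (\<lambda>(i, j). c $ i * c $ j)) *\<^sub>v w) =
    Re (k * (c \<bullet> map_vec of_real w)\<^sup>2)"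
proof -
  have "w \<bullet> (map_mat Re (k \<cdot>\<^sub>m mat n n (\<lambda>(i, j). c $ i * c $ j)) *\<^sub>v w)
      = Re (\<Sum>i<n. \<Sum>j<n. k * ((c $ i * of_real (w $ i)) * (c $ j * of_real (w $ j))))"
    using c w by (auto simp: scalar_prod_def lessThan_atLeast0 sum_distrib_left Re_sum algebra_simps
        intro!: sum.cong)
  also have "(\<Sum>i<n. \<Sum>j<n. k * ((c $ i * of_real (w $ i)) * (c $ j * of_real (w $ j)))) =
      k * (c \<bullet> map_vec of_real w)\<^sup>2"
  proof -
    have "c \<bullet> map_vec of_real w = (\<Sum>i<n. c $ i * of_real (w $ i))"
      using w by (simp add: scalar_prod_def lessThan_atLeast0)
    then have "(c \<bullet> map_vec of_real w)\<^sup>2 =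
        (\<Sum>i<n. \<Sum>j<n. (c $ i * of_real (w $ i)) * (c $ j * of_real (w $ j)))"
      unfolding power2_eq_square by (simp add: sum_product)
    then show ?thesis
      by (simp add: sum_distrib_left)
  qed
  finally show ?thesis .
qed

lemma complex_forms_diag_congruence:
  fixes M P :: "real mat" and c :: "complex vec"
  assumes P: "P \<in> carrier_mat n n" and M: "M = P * mat_diag n d * transpose_mat P"
    and c: "c \<in> carrier_vec n"
  defines "z \<equiv> \<lambda>l. (transpose_mat (map_mat of_real P) *\<^sub>v c) $ l"
  shows "c \<bullet> (map_mat of_real M *\<^sub>v c) = (\<Sum>l<n. of_real (d l) * (z l)\<^sup>2)"
    and "conjugate c \<bullet> (map_mat of_real M *\<^sub>v c) = of_real (\<Sum>l<n. d l * (cmod (z l))\<^sup>2)"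
proof -
  let ?P = "map_mat complex_of_real P"
  have P': "?P \<in> carrier_mat n n"
    using P by simp
  have M': "map_mat of_real M = ?P * mat_diag n (\<lambda>l. of_real (d l)) * transpose_mat ?P"
    unfolding M using of_real_diag_congruence[OF P] .
  show "c \<bullet> (map_mat of_real M *\<^sub>v c) = (\<Sum>l<n. of_real (d l) * (z l)\<^sup>2)"
    using scalar_prod_diag_congruence[OF P' M' c c] by (simp add: z_def power2_eq_square mult.assoc)
  have "transpose_mat ?P *\<^sub>v conjugate c = conjugate (transpose_mat ?P *\<^sub>v c)"
    using conjugate_of_real_mat_mult_vec[of "transpose_mat P" n n c] P c by (simp add: map_mat_transpose)
  then have "conjugate c \<bullet> (map_mat of_real M *\<^sub>v c) = (\<Sum>l<n. of_real (d l) * cnj (z l) * z l)"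
    using scalar_prod_diag_congruence[OF P' M' _ c, of "conjugate c"] P c by (simp add: z_def)
  also have "\<dots> = of_real (\<Sum>l<n. d l * (cmod (z l))\<^sup>2)"
    unfolding of_real_sum
  proof (intro sum.cong refl)
    fix l
    have "cnj (z l) * z l = of_real ((cmod (z l))\<^sup>2)"
      by (metis complex_norm_square mult.commute)
    then show "of_real (d l) * cnj (z l) * z l = of_real (d l * (cmod (z l))\<^sup>2)"
      by (simp add: mult.assoc)
  qed
  finally show "conjugate c \<bullet> (map_mat of_real M *\<^sub>v c) = of_real (\<Sum>l<n. d l * (cmod (z l))\<^sup>2)" .
qed

lemma quadratic_form_update_diag_congruence:
  fixes M P :: "real mat" and c :: "complex vec"
  assumes P: "P \<in> carrier_mat n n" and M: "M = P * mat_diag n d * transpose_mat P"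
    and sym: "transpose_mat M = M" and c: "c \<in> carrier_vec n" and v: "v \<in> carrier_vec n"
  defines "z \<equiv> \<lambda>l. (transpose_mat (map_mat of_real P) *\<^sub>v c) $ l"
    and "V \<equiv> \<lambda>l. (transpose_mat P *\<^sub>v v) $ l"
  shows "v \<bullet> ((M + M * map_mat Re (k \<cdot>\<^sub>m mat n n (\<lambda>(i, j). c $ i * c $ j)) * M) *\<^sub>v v) =
    diag_form n d V V + Re (k * (\<Sum>l<n. of_real (d l) * z l * of_real (V l))\<^sup>2)"
proof -
  let ?P = "map_mat complex_of_real P" and ?R = "map_mat Re (k \<cdot>\<^sub>m mat n n (\<lambda>(i, j). c $ i * c $ j))"
  have Mc: "M \<in> carrier_mat n n"
    unfolding M using P by (auto intro!: mult_carrier_mat[of _ n n])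
  have "v \<bullet> ((M + M * ?R * M) *\<^sub>v v) = v \<bullet> (M *\<^sub>v v) + (M *\<^sub>v v) \<bullet> (?R *\<^sub>v (M *\<^sub>v v))"
    using quadratic_form_sandwich[OF Mc sym _ v] by simp
  also have "v \<bullet> (M *\<^sub>v v) = diag_form n d V V"
    using scalar_prod_diag_congruence[OF P M v v] by (simp add: diag_form_def V_def)
  also have "(M *\<^sub>v v) \<bullet> (?R *\<^sub>v (M *\<^sub>v v)) = Re (k * (c \<bullet> map_vec of_real (M *\<^sub>v v))\<^sup>2)"
    using quadratic_form_rank_one_real_part[OF c, of "M *\<^sub>v v"] Mc v by simp
  also have "c \<bullet> map_vec of_real (M *\<^sub>v v) = (\<Sum>l<n. of_real (d l) * z l * of_real (V l))"
  proof -
    have P': "?P \<in> carrier_mat n n"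
      using P by simp
    have M': "map_mat of_real M = ?P * mat_diag n (\<lambda>l. of_real (d l)) * transpose_mat ?P"
      unfolding M using of_real_diag_congruence[OF P] .
    have coords: "transpose_mat ?P *\<^sub>v map_vec of_real v = map_vec of_real (transpose_mat P *\<^sub>v v)"
      using P v by (metis map_mat_transpose of_real_hom.mult_mat_vec_hom transpose_carrier_mat)
    have "c \<bullet> map_vec of_real (M *\<^sub>v v) = c \<bullet> (map_mat of_real M *\<^sub>v map_vec of_real v)"
      unfolding of_real_hom.mult_mat_vec_hom[OF Mc v] ..
    also have "\<dots> = (\<Sum>l<n. of_real (d l) * (transpose_mat ?P *\<^sub>v c) $ l *
        (transpose_mat ?P *\<^sub>v map_vec of_real v) $ l)"
      using scalar_prod_diag_congruence[OF P' M' c, of "map_vec of_real v"] v by simp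
    also have "\<dots> = (\<Sum>l<n. of_real (d l) * z l * of_real (V l))"
      unfolding coords z_def V_def using P by (intro sum.cong refl) auto
    finally show ?thesis .
  qed
  finally show ?thesis .
qed

theorem mainTheorem4:
  fixes g :: nat and M :: "real mat" and c :: "complex vec"
  assumes "M \<in> carrier_mat g g"
    and "transpose_mat M = M"
    and "has_signature M (g - 1) 1"
    and "c \<in> carrier_vec g"
    and "conjugate c \<bullet> (map_mat complex_of_real M *\<^sub>v c) \<in> \<real>"
    and "Re (conjugate c \<bullet> (map_mat complex_of_real M *\<^sub>v c)) < 0"
  shows "c \<bullet> (map_mat complex_of_real M *\<^sub>v c) \<noteq> 0 \<and>
    (let N = M + M * map_mat Re
           (inverse (- (1/2) * (c \<bullet> (map_mat complex_of_real M *\<^sub>v c)))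
              \<cdot>\<^sub>m mat g g (\<lambda>(i, j). c $ i * c $ j)) * M
     in transpose_mat N = N \<and> pos_def_mat N)"
proof -
  let ?MC = "map_mat complex_of_real M"
  obtain P d where P: "P \<in> carrier_mat g g" "transpose_mat P * P = 1\<^sub>m g" "P * transpose_mat P = 1\<^sub>m g"
    and M: "M = P * mat_diag g d * transpose_mat P"
    using real_symmetric_mat_spectral_decomposition[OF assms(1,2)] by blast
  have lor: "lorentzian_weights g d"
    using lorentzian_weights_of_signature[OF char_poly_spectral_decomposition[OF assms(1) P M] assms(3)] .
  define z where "z l = (transpose_mat (map_mat complex_of_real P) *\<^sub>v c) $ l" for l
  have timelike: "(\<Sum>l<g. d l * (cmod (z l))\<^sup>2) < 0"
    using complex_forms_diag_congruence(2)[OF P(1) M assms(4)] assms(6) unfolding z_def by simp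
  have square: "c \<bullet> (?MC *\<^sub>v c) = (\<Sum>l<g. of_real (d l) * (z l)\<^sup>2)"
    using complex_forms_diag_congruence(1)[OF P(1) M assms(4)] unfolding z_def .
  have nonzero: "c \<bullet> (?MC *\<^sub>v c) \<noteq> 0"
    unfolding square using lorentzian_complex_square_nonzero[OF lor timelike] .
  define k where "k = inverse (- (1/2) * (c \<bullet> (?MC *\<^sub>v c)))"
  define R where "R = map_mat Re (k \<cdot>\<^sub>m mat g g (\<lambda>(i, j). c $ i * c $ j))"
  have R: "R \<in> carrier_mat g g" "transpose_mat R = R"
    unfolding R_def by (auto intro!: eq_matI simp: mult.commute)
  have "v \<bullet> ((M + M * R * M) *\<^sub>v v) > 0" if v: "v \<in> carrier_vec g" "v \<noteq> 0\<^sub>v g" for v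
  proof -
    have "k = - 2 / (\<Sum>l<g. of_real (d l) * (z l)\<^sup>2)"
      unfolding k_def square by (simp add: field_simps)
    then show ?thesis
      using quadratic_form_update_diag_congruence[OF P(1) M assms(2,4) v(1), of k]
        lorentzian_complex_update_pos[OF lor timelike orthogonal_coordinates_nonzero[OF P(1,3) v]]
      unfolding R_def z_def by simp
  qed
  then have "pos_def_mat (M + M * R * M)"
    unfolding pos_def_mat_def using assms(1) R(1) by simp
  then show ?thesis
    using nonzero symmetric_sandwich[OF assms(1,2) R] unfolding k_def R_def Let_def by simp
qed
end
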